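(* Let $G$ and $H$ be finite simple graphs, let $S$ be a minimal dominating set of $H$, and let $D$ be a minimal dominating set of $G$ with $c(D)\neq\emptyset$. Then for every $u\in c(D)$, the set $(\{u\} \times S) \cup \big( (D-\{u\}) \times V(H)\big)$ is a dominating set of the Cartesian product $G \,\square\, H$. If, in addition, $c(D)=\{u\}$, then $(\{u\} \times S) \cup \big( (D-\{u\}) \times V(H)\big)$ is a minimal dominating set of $G \,\square\, H$.
   Context: For $u\in A\subseteq V(G)$, the private neighborhood of $u$ with respect to $A$ is $\mathrm{pn}[u,A]=\{x\in V(G): N[x]\cap A=\{u\}\}$. For a dominating set $D$ of $G$, $c(D)=\{x\in D : \mathrm{pn}[x,D]=\{x\}\}$. The Cartesian product $G\,\square\, H$ has vertex set $V(G)\times V(H)$, with $(g_1,h_1)$ adjacent to $(g_2,h_2)$ iff either ($g_1=g_2$ and $h_1h_2\in E(H)$) or ($h_1=h_2$ and $g_1g_2\in E(G)$). *)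

theory Defs
  imports Main
begin

definition simple_graph :: "'a set \<Rightarrow> ('a \<Rightarrow> 'a \<Rightarrow> bool) \<Rightarrow> bool" where
  "simple_graph V E \<longleftrightarrow> finite V \<and> (\<forall>x y. E x y \<longrightarrow> x \<in> V \<and> y \<in> V)
     \<and> (\<forall>x y. E x y \<longrightarrow> E y x) \<and> (\<forall>x. \<not> E x x)"

definition closed_nbhd :: "'a set \<Rightarrow> ('a \<Rightarrow> 'a \<Rightarrow> bool) \<Rightarrow> 'a \<Rightarrow> 'a set" where
  "closed_nbhd V E x = {y \<in> V. y = x \<or> E x y}"

definition dominating :: "'a set \<Rightarrow> ('a \<Rightarrow> 'a \<Rightarrow> bool) \<Rightarrow> 'a set \<Rightarrow> bool" where
  "dominating V E D \<longleftrightarrow> D \<subseteq> V \<and> (\<forall>x\<in>V. closed_nbhd V E x \<inter> D \<noteq> {})"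

definition minimal_dominating :: "'a set \<Rightarrow> ('a \<Rightarrow> 'a \<Rightarrow> bool) \<Rightarrow> 'a set \<Rightarrow> bool" where
  "minimal_dominating V E D \<longleftrightarrow> dominating V E D \<and> (\<forall>D'. D' \<subset> D \<longrightarrow> \<not> dominating V E D')"

definition priv_nbhd :: "'a set \<Rightarrow> ('a \<Rightarrow> 'a \<Rightarrow> bool) \<Rightarrow> 'a \<Rightarrow> 'a set \<Rightarrow> 'a set" where
  "priv_nbhd V E u A = {x \<in> V. closed_nbhd V E x \<inter> A = {u}}"

definition cset :: "'a set \<Rightarrow> ('a \<Rightarrow> 'a \<Rightarrow> bool) \<Rightarrow> 'a set \<Rightarrow> 'a set" where
  "cset V E D = {x \<in> D. priv_nbhd V E x D = {x}}"

definition cart_edge :: "('a \<Rightarrow> 'a \<Rightarrow> bool) \<Rightarrow> ('b \<Rightarrow> 'b \<Rightarrow> bool) \<Rightarrow> 'a \<times> 'b \<Rightarrow> 'a \<times> 'b \<Rightarrow> bool" where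
  "cart_edge EG EH p q \<longleftrightarrow>
     (fst p = fst q \<and> EH (snd p) (snd q)) \<or> (snd p = snd q \<and> EG (fst p) (fst q))"

end

theory Submission
  imports Defs
begin

text \<open>Since \<open>u \<in> c(D)\<close> is its own only private neighbour, every vertex of \<open>G\<close> other than \<open>u\<close>
  is still dominated by \<open>D - {u}\<close>; so the fibre over \<open>u\<close> is dominated by \<open>{u} \<times> S\<close> and every
  other fibre by \<open>(D - {u}) \<times> V(H)\<close>. For minimality, \<open>(u, s)\<close> has the private neighbour
  \<open>(u, h)\<close> for a private neighbour \<open>h\<close> of \<open>s\<close> in \<open>H\<close>, and since no neighbour of \<open>u\<close> lies in
  \<open>D\<close> nothing else of the set meets it. For \<open>d \<in> D - {u}\<close> we have \<open>d \<notin> c(D) = {u}\<close>, so \<open>d\<close> has a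
  private neighbour \<open>x \<notin> D\<close>, and \<open>(x, h)\<close> is private to \<open>(d, h)\<close>.\<close>

lemma minimal_dominating_iff_priv_nbhd:
  "minimal_dominating V E D \<longleftrightarrow> dominating V E D \<and> (\<forall>d\<in>D. priv_nbhd V E d D \<noteq> {})"
proof
  assume min: "minimal_dominating V E D"
  then have dom: "dominating V E D" unfolding minimal_dominating_def by blast
  have "priv_nbhd V E d D \<noteq> {}" if "d \<in> D" for d
  proof
    assume no_priv: "priv_nbhd V E d D = {}"
    have "dominating V E (D - {d})"
      unfolding dominating_def
    proof (intro conjI ballI)
      show "D - {d} \<subseteq> V" using dom unfolding dominating_def by blast
    next
      fix x assume "x \<in> V"
      then have "closed_nbhd V E x \<inter> D \<noteq> {}" using dom unfolding dominating_def by blast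
      moreover have "closed_nbhd V E x \<inter> D \<noteq> {d}"
        using no_priv \<open>x \<in> V\<close> unfolding priv_nbhd_def by blast
      ultimately show "closed_nbhd V E x \<inter> (D - {d}) \<noteq> {}" by blast
    qed
    moreover have "D - {d} \<subset> D" using \<open>d \<in> D\<close> by blast
    ultimately show False using min unfolding minimal_dominating_def by blast
  qed
  with dom show "dominating V E D \<and> (\<forall>d\<in>D. priv_nbhd V E d D \<noteq> {})" by blast
next
  assume "dominating V E D \<and> (\<forall>d\<in>D. priv_nbhd V E d D \<noteq> {})"
  then have dom: "dominating V E D" and priv: "\<And>d. d \<in> D \<Longrightarrow> priv_nbhd V E d D \<noteq> {}"
    by blast+
  have "\<not> dominating V E D'" if "D' \<subset> D" for D'
  proof -
    obtain d where "d \<in> D" "d \<notin> D'" using \<open>D' \<subset> D\<close> by blast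
    then obtain x where "x \<in> priv_nbhd V E d D" using priv by blast
    then have "x \<in> V" "closed_nbhd V E x \<inter> D = {d}" unfolding priv_nbhd_def by blast+
    moreover have "D' \<subseteq> D" using \<open>D' \<subset> D\<close> by (rule psubset_imp_subset)
    ultimately have "closed_nbhd V E x \<inter> D' = {}" using \<open>d \<notin> D'\<close> by auto
    with \<open>x \<in> V\<close> show ?thesis unfolding dominating_def by blast
  qed
  with dom show "minimal_dominating V E D" unfolding minimal_dominating_def by blast
qed

lemma self_in_closed_nbhd: "x \<in> V \<Longrightarrow> x \<in> closed_nbhd V E x"
  unfolding closed_nbhd_def by blast

lemma cset_closed_nbhd_inter:
  assumes "u \<in> cset V E D"
  shows "u \<in> V" and "closed_nbhd V E u \<inter> D = {u}"
proof -
  have "u \<in> priv_nbhd V E u D" using assms unfolding cset_def by blast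
  then show "u \<in> V" "closed_nbhd V E u \<inter> D = {u}" unfolding priv_nbhd_def by blast+
qed

lemma cset_dominated_by_rest:
  assumes "dominating V E D" "u \<in> cset V E D" "g \<in> V" "g \<noteq> u"
  shows "closed_nbhd V E g \<inter> (D - {u}) \<noteq> {}"
proof -
  have "g \<notin> priv_nbhd V E u D" using assms(2,4) unfolding cset_def by blast
  then have "closed_nbhd V E g \<inter> D \<noteq> {u}" using \<open>g \<in> V\<close> unfolding priv_nbhd_def by blast
  moreover have "closed_nbhd V E g \<inter> D \<noteq> {}" using assms(1,3) unfolding dominating_def by blast
  ultimately show ?thesis by blast
qed

lemma ex_external_priv_nbhd:
  assumes "minimal_dominating V E D" "d \<in> D" "d \<notin> cset V E D"
  obtains x where "x \<in> V" "x \<notin> D" "closed_nbhd V E x \<inter> D = {d}"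
proof -
  have "priv_nbhd V E d D \<noteq> {}"
    using assms(1,2) unfolding minimal_dominating_iff_priv_nbhd by blast
  moreover have "priv_nbhd V E d D \<noteq> {d}" using assms(2,3) unfolding cset_def by blast
  ultimately obtain x where x: "x \<in> priv_nbhd V E d D" "x \<noteq> d" by blast
  then have "x \<in> V" "closed_nbhd V E x \<inter> D = {d}" unfolding priv_nbhd_def by blast+
  moreover have "x \<in> closed_nbhd V E x" using \<open>x \<in> V\<close> by (rule self_in_closed_nbhd)
  ultimately show thesis using that \<open>x \<noteq> d\<close> by blast
qed

lemma closed_nbhd_cart:
  assumes "g \<in> VG" "h \<in> VH"
  shows "closed_nbhd (VG \<times> VH) (cart_edge EG EH) (g, h) =
           {g} \<times> closed_nbhd VH EH h \<union> closed_nbhd VG EG g \<times> {h}"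
  using assms unfolding closed_nbhd_def cart_edge_def by auto

lemma dominating_cart_cset_fibre:
  assumes domD: "dominating VG EG D" and u: "u \<in> cset VG EG D" and domS: "dominating VH EH S"
  shows "dominating (VG \<times> VH) (cart_edge EG EH) ({u} \<times> S \<union> (D - {u}) \<times> VH)"
  unfolding dominating_def
proof (intro conjI ballI)
  show "{u} \<times> S \<union> (D - {u}) \<times> VH \<subseteq> VG \<times> VH"
    using domD domS cset_closed_nbhd_inter(1)[OF u] unfolding dominating_def by blast
next
  fix p assume "p \<in> VG \<times> VH"
  then obtain g h where p: "p = (g, h)" "g \<in> VG" "h \<in> VH" by blast
  show "closed_nbhd (VG \<times> VH) (cart_edge EG EH) p \<inter> ({u} \<times> S \<union> (D - {u}) \<times> VH) \<noteq> {}"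
  proof (cases "g = u")
    case True
    obtain s where "s \<in> closed_nbhd VH EH h" "s \<in> S"
      using domS \<open>h \<in> VH\<close> unfolding dominating_def by blast
    then have "(u, s) \<in> closed_nbhd (VG \<times> VH) (cart_edge EG EH) p"
      using closed_nbhd_cart[OF p(2,3)] p(1) True by blast
    with \<open>s \<in> S\<close> show ?thesis by blast
  next
    case False
    obtain d where "d \<in> closed_nbhd VG EG g" "d \<in> D - {u}"
      using cset_dominated_by_rest[OF domD u \<open>g \<in> VG\<close> False] by blast
    moreover from this(1) have "(d, h) \<in> closed_nbhd (VG \<times> VH) (cart_edge EG EH) p"
      using closed_nbhd_cart[OF p(2,3)] p(1) by blast
    ultimately show ?thesis using \<open>h \<in> VH\<close> by blast
  qed
qed

lemma minimal_dominating_cart_cset_fibre: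
  assumes minD: "minimal_dominating VG EG D" and cD: "cset VG EG D = {u}"
    and minS: "minimal_dominating VH EH S"
  shows "minimal_dominating (VG \<times> VH) (cart_edge EG EH) ({u} \<times> S \<union> (D - {u}) \<times> VH)"
    (is "minimal_dominating ?V ?E ?A")
proof -
  have u: "u \<in> cset VG EG D" using cD by blast
  have uD: "u \<in> D" using u unfolding cset_def by blast
  note uV = cset_closed_nbhd_inter(1)[OF u] and Nu = cset_closed_nbhd_inter(2)[OF u]
  have priv: "priv_nbhd ?V ?E p ?A \<noteq> {}" if "p \<in> ?A" for p
  proof (cases "p \<in> {u} \<times> S")
    case True
    then obtain s where p: "p = (u, s)" "s \<in> S" by blast
    then have "priv_nbhd VH EH s S \<noteq> {}"
      using minS unfolding minimal_dominating_iff_priv_nbhd by blast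
    then obtain h where "h \<in> priv_nbhd VH EH s S" by blast
    then have h: "h \<in> VH" "closed_nbhd VH EH h \<inter> S = {s}" unfolding priv_nbhd_def by blast+
    have "closed_nbhd ?V ?E (u, h) \<inter> ?A = {p}"
      unfolding closed_nbhd_cart[OF uV h(1)] using h(2) self_in_closed_nbhd[OF h(1)] Nu p by auto
    then show ?thesis using uV h(1) unfolding priv_nbhd_def by blast
  next
    case False
    with that obtain d h where p: "p = (d, h)" "d \<in> D" "d \<noteq> u" "h \<in> VH" by blast
    moreover have "d \<notin> cset VG EG D" using cD p(3) by blast
    ultimately obtain x where x: "x \<in> VG" "x \<notin> D" "closed_nbhd VG EG x \<inter> D = {d}"
      using ex_external_priv_nbhd[OF minD] by blast
    have "closed_nbhd ?V ?E (x, h) \<inter> ?A = {p}"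
      unfolding closed_nbhd_cart[OF x(1) p(4)] using x(2,3) uD p by auto
    then show ?thesis using x(1) p(4) unfolding priv_nbhd_def by blast
  qed
  have domD: "dominating VG EG D" and domS: "dominating VH EH S"
    using minD minS unfolding minimal_dominating_def by blast+
  show ?thesis
    unfolding minimal_dominating_iff_priv_nbhd
    using dominating_cart_cset_fibre[OF domD u domS] priv by blast
qed

theorem lemma17:
  fixes VG :: "'a set" and EG :: "'a \<Rightarrow> 'a \<Rightarrow> bool"
    and VH :: "'b set" and EH :: "'b \<Rightarrow> 'b \<Rightarrow> bool"
    and S :: "'b set" and D :: "'a set"
  assumes "simple_graph VG EG" and "simple_graph VH EH"
    and "minimal_dominating VH EH S"
    and "minimal_dominating VG EG D"
    and "cset VG EG D \<noteq> {}"
  shows "\<forall>u \<in> cset VG EG D.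
           dominating (VG \<times> VH) (cart_edge EG EH) (({u} \<times> S) \<union> ((D - {u}) \<times> VH))
         \<and> (cset VG EG D = {u} \<longrightarrow>
              minimal_dominating (VG \<times> VH) (cart_edge EG EH) (({u} \<times> S) \<union> ((D - {u}) \<times> VH)))"
proof (intro ballI conjI impI)
  fix u assume u: "u \<in> cset VG EG D"
  have domD: "dominating VG EG D" and domS: "dominating VH EH S"
    using assms(3,4) unfolding minimal_dominating_def by blast+
  show "dominating (VG \<times> VH) (cart_edge EG EH) (({u} \<times> S) \<union> ((D - {u}) \<times> VH))"
    using dominating_cart_cset_fibre[OF domD u domS] .
  assume "cset VG EG D = {u}"
  from minimal_dominating_cart_cset_fibre[OF assms(4) this assms(3)]
  show "minimal_dominating (VG \<times> VH) (cart_edge EG EH) (({u} \<times> S) \<union> ((D - {u}) \<times> VH))" .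
qed

end
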